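(* Let $k\geq3$, $A=\{0,1,\dots,k-1\}$, $N=k-1$ and let $T\colon A^{N^2}\to A$ be given by $T(x_{1,1},\dots,x_{1,N},\dots,x_{N,1},\dots,x_{N,N})=1$ if $x_{i,j}=i$ for all $i,j$ or $x_{i,j}=j$ for all $i,j$, and $0$ otherwise. Then \[\{T\}^{*(1)}=\{\mathrm{id}_A\}\cup\{f\colon A\to A : f(0)=f(1)=0\}.\]
   Context: An $m$-ary $g$ commutes with an $n$-ary $h$ if $g\bigl((h((x_{ij})_{j}))_{i}\bigr)=h\bigl((g((x_{ij})_{i}))_{j}\bigr)$ for all $(x_{ij})\in A^{m\times n}$. For $F$ a set of finitary operations on $A$ (positive arity), $F^*$ is the set of all finitary operations of positive arity commuting with every member of $F$, and $F^{*(1)}$ is the set of unary members of $F^*$. *)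

theory Defs
  imports "HOL-Library.FuncSet"
begin

text \<open>An n-ary operation on A is modelled as a function on tuples
  x :: nat \<Rightarrow> 'a, whose argument positions are 0,...,n-1 (only the values
  x 0, ..., x (n-1) are passed; other positions are cut off by restrict).\<close>

definition commutes ::
  "'a set \<Rightarrow> nat \<Rightarrow> ((nat \<Rightarrow> 'a) \<Rightarrow> 'a) \<Rightarrow> nat \<Rightarrow> ((nat \<Rightarrow> 'a) \<Rightarrow> 'a) \<Rightarrow> bool" where
  "commutes A m g n h \<longleftrightarrow>
     (\<forall>x. (\<forall>i<m. \<forall>j<n. x i j \<in> A) \<longrightarrow>
        g (\<lambda>i\<in>{..<m}. h (\<lambda>j\<in>{..<n}. x i j)) =
        h (\<lambda>j\<in>{..<n}. g (\<lambda>i\<in>{..<m}. x i j)))"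

definition unary_centralizer ::
  "'a set \<Rightarrow> (nat \<times> ((nat \<Rightarrow> 'a) \<Rightarrow> 'a)) set \<Rightarrow> ('a \<Rightarrow> 'a) set" where
  "unary_centralizer A F =
     {f \<in> A \<rightarrow>\<^sub>E A. \<forall>(n, h) \<in> F. commutes A 1 (\<lambda>x. f (x 0)) n h}"

text \<open>The N^2-ary operation T on {0..k-1}, N = k-1. The argument
  x_{i,j} (1 \<le> i,j \<le> N, row-major) sits at position (i-1)*N + (j-1),
  i.e. position p has i = p div N + 1 and j = p mod N + 1.\<close>

definition T_op :: "nat \<Rightarrow> (nat \<Rightarrow> nat) \<Rightarrow> nat" where
  "T_op k x = (let N = k - 1 in
     if (\<forall>p<N*N. x p = p div N + 1) \<or> (\<forall>p<N*N. x p = p mod N + 1) then 1 else 0)"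

end

theory Submission
  imports Defs
begin

text \<open>T is 1 exactly
  on the row pattern x(i,j) = i and the column pattern x(i,j) = j, and each of them
  takes every value 1, ..., N. Evaluating at the constant tuple 0 gives f 0 = 0; evaluating at the
  row pattern shows that f is the identity or f 1 = 0. Conversely, if f 0 = f 1 = 0 then f \<circ> y
  cannot take all values 1, ..., N, since f would then be surjective, hence injective, on A; so
  both sides vanish.\<close>

lemma commutes_unary_iff:
  "commutes A 1 (\<lambda>x. f (x 0)) n h \<longleftrightarrow>
   (\<forall>y. (\<forall>j<n. y j \<in> A) \<longrightarrow> f (h (restrict y {..<n})) = h (\<lambda>j\<in>{..<n}. f (y j)))"
proof (intro iffI allI impI)
  fix y :: "nat \<Rightarrow> 'a"
  assume "commutes A 1 (\<lambda>x. f (x 0)) n h" and "\<forall>j<n. y j \<in> A"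
  then show "f (h (restrict y {..<n})) = h (\<lambda>j\<in>{..<n}. f (y j))"
    unfolding commutes_def by (drule_tac x = "\<lambda>_. y" in spec) simp
next
  assume "\<forall>y. (\<forall>j<n. y j \<in> A) \<longrightarrow> f (h (restrict y {..<n})) = h (\<lambda>j\<in>{..<n}. f (y j))"
  then show "commutes A 1 (\<lambda>x. f (x 0)) n h"
    unfolding commutes_def by simp
qed

lemma unary_centralizer_singleton_iff:
  "f \<in> unary_centralizer A {(n, h)} \<longleftrightarrow> f \<in> A \<rightarrow>\<^sub>E A \<and>
     (\<forall>y. (\<forall>j<n. y j \<in> A) \<longrightarrow> f (h (restrict y {..<n})) = h (\<lambda>j\<in>{..<n}. f (y j)))"
  unfolding unary_centralizer_def commutes_unary_iff by simp

definition row_index :: "nat \<Rightarrow> nat \<Rightarrow> nat" where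
  "row_index N p = p div N + 1"

definition col_index :: "nat \<Rightarrow> nat \<Rightarrow> nat" where
  "col_index N p = p mod N + 1"

lemma row_index_image: "0 < N \<Longrightarrow> row_index N ` {..<N * N} = {1..N}"
proof (intro equalityI subsetI)
  fix a assume "0 < N" "a \<in> {1..N}"
  then have "(a - 1) * N < N * N" "row_index N ((a - 1) * N) = a"
    by (auto simp: row_index_def)
  then show "a \<in> row_index N ` {..<N * N}" by (metis image_eqI lessThan_iff)
qed (auto simp: row_index_def Suc_le_eq dest: less_mult_imp_div_less)

lemma col_index_image: "0 < N \<Longrightarrow> col_index N ` {..<N * N} = {1..N}"
proof (intro equalityI subsetI)
  fix a assume "0 < N" "a \<in> {1..N}"
  then have "a - 1 < N * N" "col_index N (a - 1) = a"
    by (auto simp: col_index_def intro: less_le_trans[of _ N])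
  then show "a \<in> col_index N ` {..<N * N}" by (metis image_eqI lessThan_iff)
qed (auto simp: col_index_def Suc_le_eq)

lemma T_op_eq:
  "T_op k x = (if (\<forall>p<(k - 1) * (k - 1). x p = row_index (k - 1) p)
                 \<or> (\<forall>p<(k - 1) * (k - 1). x p = col_index (k - 1) p) then 1 else 0)"
  unfolding T_op_def row_index_def col_index_def Let_def ..

lemma T_op_le_1: "T_op k x \<le> 1"
  by (simp add: T_op_eq)

lemma T_op_cong:
  "(\<And>p. p < (k - 1) * (k - 1) \<Longrightarrow> x p = y p) \<Longrightarrow> T_op k x = T_op k y"
  by (simp add: T_op_eq)

lemma T_op_restrict [simp]: "T_op k (restrict x {..<(k - 1) * (k - 1)}) = T_op k x"
  by (simp add: T_op_eq)

lemma T_op_eq_1_imp_range: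
  assumes "T_op k x = 1"
  shows "{1..k - 1} \<subseteq> x ` {..<(k - 1) * (k - 1)}"
proof (cases "k - 1 = 0")
  case False
  from assms consider
      "\<forall>p<(k - 1) * (k - 1). x p = row_index (k - 1) p"
    | "\<forall>p<(k - 1) * (k - 1). x p = col_index (k - 1) p"
    unfolding T_op_eq by (metis zero_neq_one)
  then show ?thesis
  proof cases
    case 1
    then have "x ` {..<(k - 1) * (k - 1)} = row_index (k - 1) ` {..<(k - 1) * (k - 1)}"
      by (intro image_cong) auto
    with False show ?thesis by (simp add: row_index_image)
  next
    case 2
    then have "x ` {..<(k - 1) * (k - 1)} = col_index (k - 1) ` {..<(k - 1) * (k - 1)}"
      by (intro image_cong) auto
    with False show ?thesis by (simp add: col_index_image)
  qed
qed simp

lemma T_op_const: "3 \<le> k \<Longrightarrow> T_op k (\<lambda>_. c) = 0"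
proof -
  assume "3 \<le> k"
  then have "2 * 2 \<le> (k - 1) * (k - 1)" by (intro mult_le_mono) simp_all
  with \<open>3 \<le> k\<close> have "0 < (k - 1) * (k - 1)" "k - 1 < (k - 1) * (k - 1)" "1 < (k - 1) * (k - 1)"
    "row_index (k - 1) 0 \<noteq> row_index (k - 1) (k - 1)" "col_index (k - 1) 0 \<noteq> col_index (k - 1) 1"
    by (auto simp: row_index_def col_index_def)
  then show ?thesis unfolding T_op_eq by metis
qed

lemma T_op_collapsing_comp_eq_0:
  assumes "1 < k" "f 0 = 0" "f 1 = 0" "\<forall>j<(k - 1) * (k - 1). y j < k"
  shows "T_op k (\<lambda>j. f (y j)) = 0"
proof (rule ccontr)
  assume "T_op k (\<lambda>j. f (y j)) \<noteq> 0"
  then have "T_op k (\<lambda>j. f (y j)) = 1" using T_op_le_1[of k "\<lambda>j. f (y j)"] by linarith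
  then have "{1..k - 1} \<subseteq> (\<lambda>j. f (y j)) ` {..<(k - 1) * (k - 1)}"
    by (rule T_op_eq_1_imp_range)
  also have "\<dots> \<subseteq> f ` {0..<k}" using assms(4) by auto
  finally have "{1..k - 1} \<subseteq> f ` {0..<k}" .
  moreover have "0 \<in> f ` {0..<k}" using assms(1,2) by (intro image_eqI[of _ _ 0]) simp_all
  moreover have "{0..<k} = insert 0 {1..k - 1}" using assms(1) by auto
  ultimately have "{0..<k} \<subseteq> f ` {0..<k}" by simp
  then have "inj_on f {0..<k}" by (intro finite_surj_inj) simp_all
  then show False using inj_onD[of f "{0..<k}" 0 1] assms(1-3) by simp
qed

lemma unary_centralizer_T_iff:
  "f \<in> unary_centralizer {0..<k} {((k - 1) * (k - 1), T_op k)} \<longleftrightarrow>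
     f \<in> {0..<k} \<rightarrow>\<^sub>E {0..<k} \<and>
     (\<forall>y. (\<forall>j<(k - 1) * (k - 1). y j < k) \<longrightarrow> f (T_op k y) = T_op k (\<lambda>j. f (y j)))"
  unfolding unary_centralizer_singleton_iff T_op_restrict by simp

lemma T_commuting_fixes_0:
  assumes "3 \<le> k"
    and commute: "\<And>y. \<forall>j<(k - 1) * (k - 1). y j < k \<Longrightarrow> f (T_op k y) = T_op k (\<lambda>j. f (y j))"
  shows "f 0 = 0"
  using commute[of "\<lambda>_. 0"] assms(1) by (simp add: T_op_const)

text \<open>The image of the row pattern under f has equal entries at positions 0 and 1, so it is
  never the column pattern.\<close>

lemma T_commuting_fixes_or_collapses:
  assumes "3 \<le> k"
    and commute: "\<And>y. \<forall>j<(k - 1) * (k - 1). y j < k \<Longrightarrow> f (T_op k y) = T_op k (\<lambda>j. f (y j))"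
  shows "(\<forall>a<k. f a = a) \<or> (f 0 = 0 \<and> f 1 = 0)"
proof -
  define N where "N = k - 1"
  have "2 \<le> N" using assms(1) by (simp add: N_def)
  have f0: "f 0 = 0" using assms by (rule T_commuting_fixes_0)
  have "\<forall>p<(k - 1) * (k - 1). row_index N p < k"
    using assms(1) by (auto simp: row_index_def N_def dest: less_mult_imp_div_less)
  moreover have "T_op k (row_index N) = 1" by (simp add: T_op_eq N_def)
  ultimately have f1: "f 1 = T_op k (\<lambda>p. f (row_index N p))"
    using commute[of "row_index N"] by simp
  consider "\<forall>p<N * N. f (row_index N p) = row_index N p"
    | "\<forall>p<N * N. f (row_index N p) = col_index N p"
    | "f 1 = 0"
    using f1 unfolding T_op_eq N_def[symmetric] by (auto split: if_splits)
  then show ?thesis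
  proof cases
    case 1
    then have "\<forall>a\<in>row_index N ` {..<N * N}. f a = a" by auto
    then have "\<forall>a\<in>{1..N}. f a = a" using row_index_image[of N] \<open>2 \<le> N\<close> by simp
    with f0 have "f a = a" if "a < k" for a
      using that by (cases "a = 0") (auto simp: N_def)
    then show ?thesis by blast
  next
    case 2
    moreover have "2 * 2 \<le> N * N" using \<open>2 \<le> N\<close> by (intro mult_le_mono)
    then have "0 < N * N" "1 < N * N" using \<open>2 \<le> N\<close> by simp_all
    ultimately have "f (row_index N 0) = col_index N 0" "f (row_index N 1) = col_index N 1"
      by simp_all
    then show ?thesis using \<open>2 \<le> N\<close> by (simp add: row_index_def col_index_def)
  qed (simp add: f0)
qed

lemma unary_centralizer_T_cases:
  assumes "3 \<le> k" "f \<in> unary_centralizer {0..<k} {((k - 1) * (k - 1), T_op k)}"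
  shows "f = restrict id {0..<k} \<or> (f \<in> {0..<k} \<rightarrow>\<^sub>E {0..<k} \<and> f 0 = 0 \<and> f 1 = 0)"
proof -
  from assms(2) have f_in: "f \<in> {0..<k} \<rightarrow>\<^sub>E {0..<k}"
    and commute: "\<And>y. \<forall>j<(k - 1) * (k - 1). y j < k \<Longrightarrow> f (T_op k y) = T_op k (\<lambda>j. f (y j))"
    unfolding unary_centralizer_T_iff by blast+
  from assms(1) commute have "(\<forall>a<k. f a = a) \<or> (f 0 = 0 \<and> f 1 = 0)"
    by (rule T_commuting_fixes_or_collapses)
  moreover have "f = restrict id {0..<k}" if "\<forall>a<k. f a = a"
    using f_in that by (intro extensionalityI[of _ "{0..<k}"]) (simp_all add: PiE_iff)
  ultimately show ?thesis using f_in by blast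
qed

lemma restrict_id_in_unary_centralizer_T:
  assumes "1 < k"
  shows "restrict id {0..<k} \<in> unary_centralizer {0..<k} {((k - 1) * (k - 1), T_op k)}"
proof -
  have "restrict id {0..<k} (T_op k y) = T_op k (\<lambda>j. restrict id {0..<k} (y j))"
    if "\<forall>j<(k - 1) * (k - 1). y j < k" for y
    using assms that T_op_le_1[of k y] by (auto intro: T_op_cong)
  then show ?thesis unfolding unary_centralizer_T_iff by auto
qed

lemma collapsing_in_unary_centralizer_T:
  assumes "1 < k" "f \<in> {0..<k} \<rightarrow>\<^sub>E {0..<k}" "f 0 = 0" "f 1 = 0"
  shows "f \<in> unary_centralizer {0..<k} {((k - 1) * (k - 1), T_op k)}"
proof -
  have "f (T_op k y) = T_op k (\<lambda>j. f (y j))" if "\<forall>j<(k - 1) * (k - 1). y j < k" for y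
  proof -
    have "f (T_op k y) = 0"
      using T_op_le_1[of k y] assms(3,4) by (cases "T_op k y") simp_all
    with T_op_collapsing_comp_eq_0[OF assms(1,3,4) that] show ?thesis by simp
  qed
  with assms(2) show ?thesis unfolding unary_centralizer_T_iff by blast
qed

theorem lemma3p2:
  fixes k :: nat
  assumes "k \<ge> 3"
  shows "unary_centralizer {0..<k} {((k - 1) * (k - 1), T_op k)} =
         {restrict id {0..<k}} \<union> {f \<in> {0..<k} \<rightarrow>\<^sub>E {0..<k}. f 0 = 0 \<and> f 1 = 0}"
proof (intro equalityI subsetI)
  fix f assume "f \<in> unary_centralizer {0..<k} {((k - 1) * (k - 1), T_op k)}"
  with assms show "f \<in> {restrict id {0..<k}} \<union> {f \<in> {0..<k} \<rightarrow>\<^sub>E {0..<k}. f 0 = 0 \<and> f 1 = 0}"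
    using unary_centralizer_T_cases by blast
next
  fix f assume "f \<in> {restrict id {0..<k}} \<union> {f \<in> {0..<k} \<rightarrow>\<^sub>E {0..<k}. f 0 = 0 \<and> f 1 = 0}"
  with assms show "f \<in> unary_centralizer {0..<k} {((k - 1) * (k - 1), T_op k)}"
    using restrict_id_in_unary_centralizer_T collapsing_in_unary_centralizer_T by auto
qed

end
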